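(* Let $f=\sum_{k\ge0}c_kh_{2^k}$ be a first-order Haar chaos with $f\in L^1$ and $c_0\neq0$. Let $\{d_k\}_{k\ge0}$ be defined by $c_0d_0=1$ and $\sum_{j=0}^kc_{k-j}d_j=0$ for $k\ge1$ (i.e. $\sum_kd_kz^k=1/\hat f(z)$ as formal power series). For $n\ge1$ let $m=\lfloor\log_2n\rfloor$, let $\nu(n)$ be the largest integer with $2^{\nu(n)}\mid n$, and set $g^n=\sum_{j=0}^{\nu(n)}d_j2^{m-j}h_{n/2^j}$. Then $\{g^n\}_{n\ge1}$ is biorthogonal to the system of dilations and translations $\{f_n\}_{n\ge1}$ of $f$: $\int_0^1f_l(t)g^n(t)\,dt=\delta_{ln}$ for all $l,n\ge1$.
   Context: All functions are complex-valued on $I=(0,1]$. Let $h=\chi_{(0,1/2]}-\chi_{(1/2,1]}$; for $n=2^k+j$ with $k\ge0$, $0\le j\le2^k-1$, $h_n(t)=h(2^kt-j)$ on $(j2^{-k},(j+1)2^{-k}]$ and $0$ otherwise. For mean-zero $f\in L^1$, the system of dilations and translations is $f_n(t)=f(2^kt-j)$ on $(j2^{-k},(j+1)2^{-k}]$, $0$ otherwise. A first-order Haar chaos is $f=\sum_{k\ge0}c_kh_{2^k}$, $c_k\in\mathbb C$; its symbol is $\hat f(z)=\sum_kc_kz^k$. *)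

theory Defs
  imports "HOL-Analysis.Analysis" "HOL-Computational_Algebra.Factorial_Ring"
begin

definition haar :: "real \<Rightarrow> complex" where
  "haar t = (if 0 < t \<and> t \<le> 1/2 then 1 else if 1/2 < t \<and> t \<le> 1 then -1 else 0)"

definition lev :: "nat \<Rightarrow> nat" where
  "lev n = nat \<lfloor>log 2 (real n)\<rfloor>"

definition pos :: "nat \<Rightarrow> nat" where
  "pos n = n - 2 ^ lev n"

definition dil :: "(real \<Rightarrow> complex) \<Rightarrow> nat \<Rightarrow> real \<Rightarrow> complex" where
  "dil f n t = (if real (pos n) / 2 ^ lev n < t \<and> t \<le> (real (pos n) + 1) / 2 ^ lev n
                then f (2 ^ lev n * t - real (pos n)) else 0)"

definition haarfun :: "nat \<Rightarrow> real \<Rightarrow> complex" where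
  "haarfun n = dil haar n"

text \<open>First-order Haar chaos f = sum_k c_k h_(2^k), as a pointwise sum (for each t only
  finitely many terms are nonzero).\<close>
definition chaos :: "(nat \<Rightarrow> complex) \<Rightarrow> real \<Rightarrow> complex" where
  "chaos c t = (\<Sum>k. c k * haarfun (2 ^ k) t)"

definition gfun :: "(nat \<Rightarrow> complex) \<Rightarrow> nat \<Rightarrow> real \<Rightarrow> complex" where
  "gfun d n t = (\<Sum>j=0..multiplicity (2::nat) n.
                   d j * of_nat (2 ^ (lev n - j)) * haarfun (n div 2 ^ j) t)"

end

theory Submission
  imports Defs
begin

text \<open>
  On each dyadic annulus (2^-(K+1), 2^-K] the chaos f is the constant
  c_0 + ... + c_(K-1) - c_K, and f vanishes outside (0, 1] with mean zero. Hence its primitive F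
  vanishes at every integer, is affine on each annulus, and F(2^-K) = 2^-K (c_0 + ... + c_(K-1)).
  After an affine change of variables, the pairing of f_l with a Haar function h_q becomes a
  second difference of F over a dyadic interval, or over an interval whose end and mid points are
  integers. It vanishes unless that interval is (0, 2^-N], which happens exactly when q = 2^N l,
  and then it equals c_N 2^-(lev q). Summing over the terms of g^n therefore leaves the
  convolution sum of d_j c_(s-j) over j \<le> s when n = 2^s l, and 0 otherwise; by the definition
  of d this is the Kronecker delta.
\<close>

lemma lev_eqI: "2 ^ k \<le> n \<Longrightarrow> n < 2 ^ Suc k \<Longrightarrow> lev n = k"
  using floor_log_nat_eq_if[of 2 k n] unfolding lev_def by simp

lemma pow_lev_le_less:
  assumes "n \<ge> 1"
  shows "2 ^ lev n \<le> n \<and> n < 2 ^ Suc (lev n)"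
proof -
  have "\<lfloor>log 2 (real n)\<rfloor> = int (lev n)"
    using assms unfolding lev_def by simp
  then show ?thesis
    using floor_log_nat_eq_powr_iff[of 2 n "lev n"] assms by simp
qed

lemma lev_pow_add: "r < 2 ^ m \<Longrightarrow> lev (2 ^ m + r) = m"
  by (rule lev_eqI) auto

lemma pos_pow_add: "r < 2 ^ m \<Longrightarrow> pos (2 ^ m + r) = r"
  by (simp add: pos_def lev_pow_add)

lemma pow_lev_add_pos:
  assumes "n \<ge> 1"
  shows "n = 2 ^ lev n + pos n" and "pos n < 2 ^ lev n"
  using pow_lev_le_less[OF assms] by (auto simp: pos_def)

lemma lev_mult_pow:
  assumes "l \<ge> 1"
  shows "lev (l * 2 ^ s) = lev l + s"
proof -
  have "l * 2 ^ s = 2 ^ (lev l + s) + pos l * 2 ^ s"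
    by (subst pow_lev_add_pos(1)[OF assms]) (simp add: power_add algebra_simps)
  moreover have "pos l * 2 ^ s < 2 ^ (lev l + s)"
    using pow_lev_add_pos(2)[OF assms] by (simp add: power_add)
  ultimately show ?thesis by (simp add: lev_pow_add)
qed

lemma pow_add_eq_mult_pow_iff:
  fixes a b e p :: nat
  assumes "b < 2 ^ a" "p < 2 ^ e"
  shows "(\<exists>k. 2 ^ e + p = (2 ^ a + b) * 2 ^ k) \<longleftrightarrow> a \<le> e \<and> p = b * 2 ^ (e - a)"
proof
  assume "\<exists>k. 2 ^ e + p = (2 ^ a + b) * 2 ^ k"
  then obtain k where k: "2 ^ e + p = 2 ^ (a + k) + b * 2 ^ k"
    by (auto simp: algebra_simps power_add)
  have "b * 2 ^ k < 2 ^ (a + k)"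
    using assms(1) by (simp add: power_add)
  then have "e = a + k" and "p = b * 2 ^ k"
    using k assms(2) lev_pow_add pos_pow_add by metis+
  then show "a \<le> e \<and> p = b * 2 ^ (e - a)" by simp
next
  assume "a \<le> e \<and> p = b * 2 ^ (e - a)"
  then have "2 ^ e + p = (2 ^ a + b) * 2 ^ (e - a)"
    by (simp add: algebra_simps power_add[symmetric])
  then show "\<exists>k. 2 ^ e + p = (2 ^ a + b) * 2 ^ k" by blast
qed

lemma div_pow_eq_mult_pow_iff:
  fixes n l :: nat
  assumes "2 ^ j dvd n"
  shows "(\<exists>k. n div 2 ^ j = l * 2 ^ k) \<longleftrightarrow> (\<exists>s. n = l * 2 ^ s \<and> j \<le> s)"
proof
  assume "\<exists>k. n div 2 ^ j = l * 2 ^ k"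
  then obtain k where "n div 2 ^ j = l * 2 ^ k" by blast
  then have "n = l * 2 ^ (k + j)"
    using assms by (metis dvd_div_mult_self mult.assoc power_add)
  then show "\<exists>s. n = l * 2 ^ s \<and> j \<le> s" by auto
next
  assume "\<exists>s. n = l * 2 ^ s \<and> j \<le> s"
  then obtain s where "n = l * 2 ^ (s - j) * 2 ^ j"
    by (metis le_add_diff_inverse2 mult.assoc power_add)
  then show "\<exists>k. n div 2 ^ j = l * 2 ^ k" by auto
qed

lemma lev_div_pow:
  assumes "2 ^ j dvd n" "n \<ge> 1"
  shows "lev (n div 2 ^ j) = lev n - j"
proof -
  obtain r where r: "n = r * 2 ^ j"
    using assms(1) by (metis dvd_div_mult_self)
  then have "r \<ge> 1"
    using assms(2) by (cases r) auto
  then show ?thesis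
    unfolding r by (simp add: lev_mult_pow)
qed

lemma dyadic_interval_within_annulus:
  assumes "1 \<le> n" "n < 2 ^ N"
  obtains K where "1 / 2 ^ Suc K \<le> real n / 2 ^ N" "(real n + 1) / 2 ^ N \<le> 1 / 2 ^ K"
proof
  define r where "r = lev n"
  have r: "2 ^ r \<le> n" "n + 1 \<le> 2 ^ Suc r"
    using pow_lev_le_less[OF assms(1)] unfolding r_def by auto
  then have "r < N"
    using assms(2) by (metis le_less_trans nat_power_less_imp_less pos2)
  then have N: "(2::real) ^ N = 2 ^ Suc (N - Suc r) * 2 ^ r"
    by (subst power_add[symmetric]) simp
  have "(2::real) ^ r / 2 ^ N = 1 / 2 ^ Suc (N - Suc r)" "(2::real) ^ Suc r / 2 ^ N = 1 / 2 ^ (N - Suc r)"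
    unfolding N by (simp_all add: field_simps)
  moreover have "real (2 ^ r) \<le> real n" "real (n + 1) \<le> real (2 ^ Suc r)"
    using r by (simp_all only: of_nat_le_iff)
  then have "2 ^ r / 2 ^ N \<le> real n / 2 ^ N" "(real n + 1) / 2 ^ N \<le> 2 ^ Suc r / 2 ^ N"
    by (simp_all add: divide_right_mono)
  ultimately show "1 / 2 ^ Suc (N - Suc r) \<le> real n / 2 ^ N"
    and "(real n + 1) / 2 ^ N \<le> 1 / 2 ^ (N - Suc r)"
    by simp_all
qed

lemma dil_eq:
  assumes "\<And>t. \<not> (0 < t \<and> t \<le> 1) \<Longrightarrow> g t = 0"
  shows "dil g n t = g (2 ^ lev n * t - real (pos n))"
proof -
  have "real (pos n) / 2 ^ lev n < t \<and> t \<le> (real (pos n) + 1) / 2 ^ lev n \<longleftrightarrow>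
        0 < 2 ^ lev n * t - real (pos n) \<and> 2 ^ lev n * t - real (pos n) \<le> 1"
    by (simp add: field_simps)
  then show ?thesis
    using assms[of "2 ^ lev n * t - real (pos n)"] unfolding dil_def by auto
qed

lemma dil_nonzero_imp_unit_interval:
  assumes "l \<ge> 1" "dil g l t \<noteq> 0"
  shows "0 < t \<and> t \<le> 1"
proof -
  have t: "real (pos l) / 2 ^ lev l < t \<and> t \<le> (real (pos l) + 1) / 2 ^ lev l"
    using assms(2) unfolding dil_def by (auto split: if_splits)
  have "real (pos l + 1) \<le> 2 ^ lev l"
    using pow_lev_add_pos(2)[OF assms(1)] by (metis Suc_eq_plus1 Suc_leI of_nat_le_iff of_nat_numeral of_nat_power)
  then have "(real (pos l) + 1) / 2 ^ lev l \<le> 1" by simp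
  moreover have "0 \<le> real (pos l) / 2 ^ lev l" by simp
  ultimately show ?thesis using t by linarith
qed

lemma haar_eq_0_outside: "\<not> (0 < t \<and> t \<le> 1) \<Longrightarrow> haar t = 0"
  by (auto simp: haar_def)

lemma haarfun_eq: "haarfun q t = haar (2 ^ lev q * t - real (pos q))"
  unfolding haarfun_def by (rule dil_eq[OF haar_eq_0_outside])

lemma haarfun_pow: "haarfun (2 ^ k) t = haar (2 ^ k * t)"
  using haarfun_eq[of "2 ^ k"] lev_pow_add[of 0 k] pos_pow_add[of 0 k] by simp

definition haar_on :: "real \<Rightarrow> real \<Rightarrow> real \<Rightarrow> real" where
  "haar_on x w t = indicator {x<..x + w / 2} t - indicator {x + w / 2<..x + w} t"

lemma haarfun_eq_haar_on: "haarfun q t = haar_on (pos q / 2 ^ lev q) (1 / 2 ^ lev q) t"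
  unfolding haarfun_eq haar_def haar_on_def by (auto simp: indicator_def field_simps)

lemma haar_on_affine:
  assumes "0 < r"
  shows "haar_on (r * x - b) (r * w) (r * t - b) = haar_on x w t"
proof -
  have "r * x - b + r * w / 2 = r * (x + w / 2) - b" "r * x - b + r * w = r * (x + w) - b"
    by (simp_all add: algebra_simps)
  then show ?thesis
    using assms by (simp add: haar_on_def indicator_def)
qed

lemma
  fixes g :: "real \<Rightarrow> complex"
  assumes g: "integrable lborel g"
  shows integrable_haar_on_dilate: "integrable lborel (\<lambda>t. haar_on x w t *\<^sub>R g (2 ^ a * t - b))"
    and integral_haar_on_dilate: "(\<integral>t. haar_on x w t *\<^sub>R g (2 ^ a * t - b) \<partial>lborel) =
      (\<integral>s. haar_on (2 ^ a * x - b) (2 ^ a * w) s *\<^sub>R g s \<partial>lborel) / 2 ^ a"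
proof -
  have integrable: "integrable lborel (\<lambda>t. haar_on x w t *\<^sub>R g t)" for x w
    unfolding haar_on_def scaleR_diff_left
    by (intro Bochner_Integration.integrable_diff integrable_mult_indicator g) auto
  define G where "G s = haar_on (2 ^ a * x - b) (2 ^ a * w) s *\<^sub>R g s" for s
  have G_affine: "G (- b + 2 ^ a * t) = haar_on x w t *\<^sub>R g (2 ^ a * t - b)" for t
    using haar_on_affine[of "2 ^ a" x b w t] unfolding G_def by (simp add: algebra_simps)
  have "integrable lborel G"
    unfolding G_def by (rule integrable)
  moreover have "(2::real) ^ a \<noteq> 0"
    by simp
  ultimately show "integrable lborel (\<lambda>t. haar_on x w t *\<^sub>R g (2 ^ a * t - b))"
    using lborel_integrable_real_affine_iff[of "2 ^ a" G "- b"] unfolding G_affine by blast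
  have "integral\<^sup>L lborel G = 2 ^ a *\<^sub>R (\<integral>t. G (- b + 2 ^ a * t) \<partial>lborel)"
    using lborel_integral_real_affine[of "2 ^ a" G "- b"] by simp
  then show "(\<integral>t. haar_on x w t *\<^sub>R g (2 ^ a * t - b) \<partial>lborel) = integral\<^sup>L lborel G / 2 ^ a"
    unfolding G_affine[symmetric] by (simp add: scaleR_conv_of_real field_simps)
qed

lemma chaos_eq_0_outside: "\<not> (0 < t \<and> t \<le> 1) \<Longrightarrow> chaos c t = 0"
proof -
  assume t: "\<not> (0 < t \<and> t \<le> 1)"
  have "\<not> (0 < 2 ^ k * t \<and> 2 ^ k * t \<le> (1::real))" for k :: nat
  proof
    assume k: "0 < 2 ^ k * t \<and> 2 ^ k * t \<le> (1::real)"
    then have "0 < t"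
      by (simp add: zero_less_mult_iff)
    then have "t \<le> 2 ^ k * t"
      by (simp add: mult_le_cancel_right1)
    then show False
      using t k \<open>0 < t\<close> by linarith
  qed
  then have "haarfun (2 ^ k) t = 0" for k
    unfolding haarfun_pow by (rule haar_eq_0_outside)
  then show ?thesis unfolding chaos_def by simp
qed

lemma chaos_on_dyadic_annulus:
  assumes "1 / 2 ^ Suc K < t" "t \<le> 1 / 2 ^ K"
  shows "chaos c t = (\<Sum>k<K. c k) - c K"
proof -
  have t: "1 < 2 ^ Suc K * t" "2 ^ K * t \<le> 1"
    using assms by (simp_all add: field_simps del: power_Suc)
  have "0 < t"
    by (rule le_less_trans[OF _ assms(1)]) simp
  have summand: "c k * haarfun (2 ^ k) t = (if k < K then c k else if k = K then - c K else 0)" for k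
  proof (cases k K rule: linorder_cases)
    case less
    have "2 ^ Suc k * t \<le> 2 ^ K * t"
      using less \<open>0 < t\<close> by (intro mult_right_mono power_increasing) auto
    then have "2 ^ k * t \<le> 1 / 2"
      using t(2) by simp
    then show ?thesis
      using less \<open>0 < t\<close> by (simp add: haarfun_pow haar_def)
  next
    case greater
    have "2 ^ Suc K * t \<le> 2 ^ k * t"
      using greater \<open>0 < t\<close> by (intro mult_right_mono power_increasing) auto
    then have "1 < 2 ^ k * t"
      using t(1) by linarith
    then show ?thesis
      using greater by (simp add: haarfun_pow haar_def)
  qed (use t in \<open>simp add: haarfun_pow haar_def\<close>)
  then have "chaos c t = (\<Sum>k\<le>K. c k * haarfun (2 ^ k) t)"
    unfolding chaos_def by (intro suminf_finite) (auto simp: summand)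
  also have "\<dots> = (\<Sum>k<K. c k) - c K"
    by (simp add: summand lessThan_Suc_atMost[symmetric])
  finally show ?thesis .
qed

locale mean_zero_chaos =
  fixes c :: "nat \<Rightarrow> complex"
  assumes integrable_chaos: "integrable lborel (chaos c)"
    and integral_chaos: "integral\<^sup>L lborel (chaos c) = 0"
begin

definition primitive :: "real \<Rightarrow> complex" where
  "primitive x = (\<integral>t. indicator {..x} t *\<^sub>R chaos c t \<partial>lborel)"

lemma primitive_diff:
  assumes "y \<le> x"
  shows "primitive x - primitive y = (\<integral>t. indicator {y<..x} t *\<^sub>R chaos c t \<partial>lborel)"
proof -
  have "primitive x =
      (\<integral>t. indicator {..y} t *\<^sub>R chaos c t + indicator {y<..x} t *\<^sub>R chaos c t \<partial>lborel)"
    unfolding primitive_def using assms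
    by (intro Bochner_Integration.integral_cong) (auto simp: indicator_def)
  also have "\<dots> = primitive y + (\<integral>t. indicator {y<..x} t *\<^sub>R chaos c t \<partial>lborel)"
    unfolding primitive_def
    by (intro Bochner_Integration.integral_add integrable_mult_indicator integrable_chaos) auto
  finally show ?thesis by simp
qed

(* For x \<ge> 1 this is the mean-zero hypothesis. *)
lemma primitive_eq_0:
  assumes "x \<le> 0 \<or> 1 \<le> x"
  shows "primitive x = 0"
  using assms
proof
  assume "x \<le> 0"
  then show ?thesis
    unfolding primitive_def
    by (subst Bochner_Integration.integral_cong[of _ _ _ "\<lambda>_. 0"])
      (auto simp: indicator_def chaos_eq_0_outside)
next
  assume "1 \<le> x"
  then have "(\<lambda>t. indicator {..x} t *\<^sub>R chaos c t) = chaos c"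
    by (auto simp: indicator_def chaos_eq_0_outside)
  then show ?thesis
    unfolding primitive_def by (simp add: integral_chaos)
qed

lemma primitive_Ints: "x \<in> \<int> \<Longrightarrow> primitive x = 0"
  by (intro primitive_eq_0) (auto elim!: Ints_cases)

lemma primitive_on_annulus:
  assumes "1 / 2 ^ Suc K \<le> x" "x \<le> 1 / 2 ^ K"
  shows "primitive x =
    primitive (1 / 2 ^ Suc K) + complex_of_real (x - 1 / 2 ^ Suc K) * ((\<Sum>k<K. c k) - c K)"
proof -
  have "primitive x - primitive (1 / 2 ^ Suc K) =
      (\<integral>t. indicator {1 / 2 ^ Suc K<..x} t *\<^sub>R ((\<Sum>k<K. c k) - c K) \<partial>lborel)"
    unfolding primitive_diff[OF assms(1)] using assms
    by (intro Bochner_Integration.integral_cong) (auto simp: indicator_def chaos_on_dyadic_annulus)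
  also have "\<dots> = complex_of_real (x - 1 / 2 ^ Suc K) * ((\<Sum>k<K. c k) - c K)"
    using assms(1) by (simp add: scaleR_conv_of_real)
  finally show ?thesis by (simp add: algebra_simps)
qed

lemma primitive_inverse_pow: "primitive (1 / 2 ^ K) = (\<Sum>k<K. c k) / 2 ^ K"
proof (induction K)
  case 0
  then show ?case by (simp add: primitive_eq_0)
next
  case (Suc K)
  have "1 / 2 ^ Suc K \<le> (1 / 2 ^ K :: real)"
    by (simp add: field_simps)
  then show ?case
    using primitive_on_annulus[of K "1 / 2 ^ K"] Suc by (simp add: field_simps)
qed

definition haar_pairing :: "real \<Rightarrow> real \<Rightarrow> complex" where
  "haar_pairing x w = 2 * primitive (x + w / 2) - primitive x - primitive (x + w)"

lemma haar_pairing_within_annulus: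
  assumes "1 / 2 ^ Suc K \<le> x" "x + w \<le> 1 / 2 ^ K" "0 \<le> w"
  shows "haar_pairing x w = 0"
proof -
  let ?affine = "\<lambda>y. primitive (1 / 2 ^ Suc K) +
    complex_of_real (y - 1 / 2 ^ Suc K) * ((\<Sum>k<K. c k) - c K)"
  have affine: "primitive y = ?affine y" if "x \<le> y" "y \<le> x + w" for y
    by (rule primitive_on_annulus) (use assms that in linarith)+
  have "primitive x = ?affine x" "primitive (x + w / 2) = ?affine (x + w / 2)"
    "primitive (x + w) = ?affine (x + w)"
    by (rule affine; use assms(3) in simp)+
  moreover have "2 * ?affine (x + w / 2) - ?affine x - ?affine (x + w) = 0"
    by (simp add: field_simps)
  ultimately show ?thesis
    unfolding haar_pairing_def by simp
qed

(* Only the interval (0, 2^-N] straddles a breakpoint of the piecewise affine primitive. *)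
lemma haar_pairing_dyadic:
  fixes i :: int
  shows "haar_pairing (i / 2 ^ N) (1 / 2 ^ N) = (if i = 0 then c N / 2 ^ N else 0)"
proof -
  consider "i \<le> 0 - 1 \<or> 2 ^ N \<le> i" | "i = 0" | "1 \<le> i \<and> i < 2 ^ N"
    by linarith
  then show ?thesis
  proof cases
    case 1
    then have "i / 2 ^ N + 1 / 2 ^ N \<le> (0::real) \<or> (1::real) \<le> i / 2 ^ N"
      by (auto simp: field_simps)
    then have vanish: "primitive (i / 2 ^ N + w) = 0" if "0 \<le> w" "w \<le> 1 / 2 ^ N" for w
      using that by (intro primitive_eq_0) linarith
    have "primitive (i / 2 ^ N) = 0"
      using vanish[of 0] by simp
    moreover have "primitive (i / 2 ^ N + 1 / 2 ^ N / 2) = 0"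
      by (rule vanish) (simp_all add: field_simps)
    moreover have "primitive (i / 2 ^ N + 1 / 2 ^ N) = 0"
      by (rule vanish) simp_all
    moreover have "i \<noteq> 0"
      using 1 by auto
    ultimately show ?thesis
      unfolding haar_pairing_def by simp
  next
    case 2
    have half: "(1 / 2 ^ N / 2 :: real) = 1 / 2 ^ Suc N"
      by simp
    have "haar_pairing (i / 2 ^ N) (1 / 2 ^ N) =
        2 * primitive (1 / 2 ^ Suc N) - primitive 0 - primitive (1 / 2 ^ N)"
      unfolding haar_pairing_def half 2 by simp
    also have "\<dots> = c N / 2 ^ N"
      unfolding primitive_inverse_pow primitive_eq_0[of 0, simplified] by (simp add: field_simps)
    finally show ?thesis
      using 2 by simp
  next
    case 3
    then have "0 < nat i" "nat i < 2 ^ N" and i: "real (nat i) = i"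
      by (simp_all add: nat_less_iff)
    then obtain K where "1 / 2 ^ Suc K \<le> i / 2 ^ N" "(real_of_int i + 1) / 2 ^ N \<le> 1 / 2 ^ K"
      using dyadic_interval_within_annulus[of "nat i" N] unfolding i by (metis Suc_leI One_nat_def)
    then have "haar_pairing (i / 2 ^ N) (1 / 2 ^ N) = 0"
      by (intro haar_pairing_within_annulus[of K]) (simp_all add: add_divide_distrib)
    then show ?thesis
      using 3 by simp
  qed
qed

lemma integral_haar_on_chaos:
  assumes "0 \<le> w"
  shows "(\<integral>t. haar_on x w t *\<^sub>R chaos c t \<partial>lborel) = haar_pairing x w"
proof -
  have "(\<integral>t. haar_on x w t *\<^sub>R chaos c t \<partial>lborel) =
      (\<integral>t. indicator {x<..x + w / 2} t *\<^sub>R chaos c t \<partial>lborel)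
      - (\<integral>t. indicator {x + w / 2<..x + w} t *\<^sub>R chaos c t \<partial>lborel)"
    unfolding haar_on_def scaleR_diff_left
    by (intro Bochner_Integration.integral_diff integrable_mult_indicator integrable_chaos) auto
  also have "\<dots> = haar_pairing x w"
    using assms by (simp add: primitive_diff[symmetric] haar_pairing_def)
  finally show ?thesis .
qed

lemma haar_pairing_rescaled:
  fixes a b e p :: nat
  shows "haar_pairing (2 ^ a * (p / 2 ^ e) - b) (2 ^ a * (1 / 2 ^ e)) / 2 ^ a =
    (if a \<le> e \<and> p = b * 2 ^ (e - a) then c (e - a) / 2 ^ e else 0)"
proof (cases "a \<le> e")
  case True
  then obtain N where N: "e = a + N"
    using le_Suc_ex by blast
  define i where "i = int p - int b * 2 ^ N"
  have "2 ^ a * (p / 2 ^ e) - b = i / 2 ^ N" "2 ^ a * (1 / 2 ^ e) = (1 / 2 ^ N :: real)"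
    unfolding N i_def by (simp_all add: power_add field_simps)
  moreover have "int (b * 2 ^ N) = int b * 2 ^ N"
    by simp
  then have "p = b * 2 ^ (e - a) \<longleftrightarrow> i = 0"
    unfolding N i_def by (metis add_diff_cancel_left' eq_iff_diff_eq_0 of_nat_eq_iff)
  ultimately show ?thesis
    using True by (simp add: haar_pairing_dyadic N power_add)
next
  case False
  then obtain D where D: "a = e + Suc D"
    by (metis add_Suc_right less_imp_Suc_add not_le)
  define z where "z = 2 ^ Suc D * int p - int b"
  have "2 ^ a * (p / 2 ^ e) - b = real_of_int z"
    "2 ^ a * (p / 2 ^ e) - b + 2 ^ a * (1 / 2 ^ e) / 2 = real_of_int (z + 2 ^ D)"
    "2 ^ a * (p / 2 ^ e) - b + 2 ^ a * (1 / 2 ^ e) = real_of_int (z + 2 ^ Suc D)"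
    unfolding D z_def by (simp_all add: power_add field_simps)
  then show ?thesis
    unfolding haar_pairing_def using False by (simp only:) (simp add: primitive_Ints)
qed

lemma integral_dil_chaos_haarfun:
  assumes "l \<ge> 1" "q \<ge> 1"
  shows "integrable lborel (\<lambda>t. dil (chaos c) l t * haarfun q t)"
    and "(\<integral>t. dil (chaos c) l t * haarfun q t \<partial>lborel) =
      (if \<exists>k. q = l * 2 ^ k then c (lev q - lev l) / 2 ^ lev q else 0)"
proof -
  define a b e p where "a = lev l" "b = pos l" "e = lev q" "p = pos q"
  have l: "l = 2 ^ a + b" "b < 2 ^ a" and q: "q = 2 ^ e + p" "p < 2 ^ e"
    using pow_lev_add_pos assms unfolding a_b_e_p_def by auto
  have integrand: "dil (chaos c) l t * haarfun q t = haar_on (p / 2 ^ e) (1 / 2 ^ e) t *\<^sub>R chaos c (2 ^ a * t - b)"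
    for t :: real
  proof -
    have "dil (chaos c) l t = chaos c (2 ^ a * t - b)"
      unfolding a_b_e_p_def by (intro dil_eq chaos_eq_0_outside)
    then show ?thesis
      unfolding a_b_e_p_def haarfun_eq_haar_on by (simp add: scaleR_conv_of_real mult.commute)
  qed
  show "integrable lborel (\<lambda>t. dil (chaos c) l t * haarfun q t)"
    unfolding integrand by (rule integrable_haar_on_dilate[OF integrable_chaos])
  have "(\<integral>t. dil (chaos c) l t * haarfun q t \<partial>lborel) =
      haar_pairing (2 ^ a * (p / 2 ^ e) - b) (2 ^ a * (1 / 2 ^ e)) / 2 ^ a"
    unfolding integrand integral_haar_on_dilate[OF integrable_chaos]
    by (subst integral_haar_on_chaos) auto
  also have "\<dots> = (if a \<le> e \<and> p = b * 2 ^ (e - a) then c (e - a) / 2 ^ e else 0)"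
    by (rule haar_pairing_rescaled)
  also have "\<dots> = (if \<exists>k. q = l * 2 ^ k then c (lev q - lev l) / 2 ^ lev q else 0)"
    unfolding l(1) q(1) pow_add_eq_mult_pow_iff[OF l(2) q(2)] lev_pow_add[OF l(2)] lev_pow_add[OF q(2)] ..
  finally show "(\<integral>t. dil (chaos c) l t * haarfun q t \<partial>lborel) =
      (if \<exists>k. q = l * 2 ^ k then c (lev q - lev l) / 2 ^ lev q else 0)" .
qed

lemma set_integral_dil_chaos_gfun:
  assumes l: "l \<ge> 1" and n: "n \<ge> 1"
  shows "(LINT t:{0<..1::real}|lborel. dil (chaos c) l t * gfun d n t) =
    (\<Sum>j=0..multiplicity 2 n. if \<exists>k. n div 2 ^ j = l * 2 ^ k then d j * c (lev n - j - lev l) else 0)"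
proof -
  define \<nu> where "\<nu> = multiplicity (2::nat) n"
  have dvd: "2 ^ j dvd n" if "j \<in> {0..\<nu>}" for j
    using that unfolding \<nu>_def by (auto intro: multiplicity_dvd')
  have quotient: "n div 2 ^ j \<ge> 1" if "j \<in> {0..\<nu>}" for j
    using dvd_imp_le[OF dvd[OF that]] n by (simp add: Suc_le_eq div_greater_zero_iff)
  have "(LINT t:{0<..1::real}|lborel. dil (chaos c) l t * gfun d n t) =
      (\<integral>t. (\<Sum>j=0..\<nu>. (d j * 2 ^ (lev n - j)) * (dil (chaos c) l t * haarfun (n div 2 ^ j) t)) \<partial>lborel)"
    unfolding set_lebesgue_integral_def
  proof (intro Bochner_Integration.integral_cong refl)
    fix t :: real
    show "indicator {0<..1} t *\<^sub>R (dil (chaos c) l t * gfun d n t) =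
        (\<Sum>j=0..\<nu>. (d j * 2 ^ (lev n - j)) * (dil (chaos c) l t * haarfun (n div 2 ^ j) t))"
    proof (cases "dil (chaos c) l t = 0")
      case False
      then have "indicator {0<..1} t = (1::real)"
        using dil_nonzero_imp_unit_interval[OF l] by simp
      then show ?thesis
        unfolding gfun_def \<nu>_def by (simp add: sum_distrib_left mult_ac)
    qed simp
  qed
  also have "\<dots> = (\<Sum>j=0..\<nu>. (d j * 2 ^ (lev n - j)) * (\<integral>t. dil (chaos c) l t * haarfun (n div 2 ^ j) t \<partial>lborel))"
    using integral_dil_chaos_haarfun(1)[OF l quotient] by (simp add: Bochner_Integration.integral_sum)
  also have "\<dots> = (\<Sum>j=0..\<nu>. if \<exists>k. n div 2 ^ j = l * 2 ^ k then d j * c (lev n - j - lev l) else 0)"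
    using integral_dil_chaos_haarfun(2)[OF l quotient] lev_div_pow[OF dvd n] by (intro sum.cong) auto
  finally show ?thesis
    unfolding \<nu>_def .
qed

end

lemma mean_zero_chaosI:
  assumes "set_integrable lborel {0<..1::real} (chaos c)" "(LINT t:{0<..1::real}|lborel. chaos c t) = 0"
  shows "mean_zero_chaos c"
proof -
  have "(\<lambda>t. indicator {0<..1::real} t *\<^sub>R chaos c t) = chaos c"
    by (auto simp: indicator_def chaos_eq_0_outside)
  then show ?thesis
    using assms unfolding set_integrable_def set_lebesgue_integral_def by unfold_locales simp_all
qed

lemma convolution_inverse_series:
  fixes c d :: "nat \<Rightarrow> complex"
  assumes "c 0 * d 0 = 1" "\<And>k. k \<ge> 1 \<Longrightarrow> (\<Sum>j=0..k. c (k - j) * d j) = 0"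
  shows "(\<Sum>j=0..s. d j * c (s - j)) = (if s = 0 then 1 else 0)"
  using assms[unfolded mult.commute[of "c _"]] by (cases "s = 0") auto

lemma sum_inverse_coeffs_biorthogonal:
  fixes c d :: "nat \<Rightarrow> complex"
  assumes "c 0 * d 0 = 1" "\<And>k. k \<ge> 1 \<Longrightarrow> (\<Sum>j=0..k. c (k - j) * d j) = 0"
    and "l \<ge> 1" "n \<ge> 1"
  shows "(\<Sum>j=0..multiplicity 2 n. if \<exists>k. n div 2 ^ j = l * 2 ^ k then d j * c (lev n - j - lev l) else 0)
    = (if l = n then 1 else 0)"
proof (cases "\<exists>s. n = l * 2 ^ s")
  case True
  then obtain s where s: "n = l * 2 ^ s" by blast
  have "s \<le> multiplicity 2 n"
    using assms(4) s by (intro multiplicity_geI) auto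
  moreover have "(\<exists>k. n div 2 ^ j = l * 2 ^ k) \<longleftrightarrow> j \<le> s" if "j \<le> multiplicity 2 n" for j
    using div_pow_eq_mult_pow_iff[OF multiplicity_dvd'[OF that]] s assms(3) by auto
  moreover have "lev n = lev l + s"
    unfolding s using assms(3) by (rule lev_mult_pow)
  ultimately have "(\<Sum>j=0..multiplicity 2 n. if \<exists>k. n div 2 ^ j = l * 2 ^ k then d j * c (lev n - j - lev l) else 0)
      = (\<Sum>j=0..s. d j * c (s - j))"
    by (intro sum.mono_neutral_cong_right) auto
  also have "\<dots> = (if l = n then 1 else 0)"
  proof -
    have "l = n \<longleftrightarrow> s = 0"
      using assms(3) unfolding s by (cases s) auto
    then show ?thesis
      by (simp add: convolution_inverse_series[OF assms(1,2)])
  qed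
  finally show ?thesis .
next
  case False
  then have "\<not> (\<exists>k. n div 2 ^ j = l * 2 ^ k)" if "j \<le> multiplicity 2 n" for j
    using div_pow_eq_mult_pow_iff[OF multiplicity_dvd'[OF that]] by auto
  moreover have "l \<noteq> n"
    using False by (metis mult.right_neutral power_0)
  ultimately show ?thesis by simp
qed

(* The hypothesis c0 is implied by d0 and not needed. *)
theorem lemma3:
  fixes c d :: "nat \<Rightarrow> complex"
  assumes c0: "c 0 \<noteq> 0"
    and d0: "c 0 * d 0 = 1"
    and dk: "\<And>k. k \<ge> 1 \<Longrightarrow> (\<Sum>j=0..k. c (k - j) * d j) = 0"
    and int: "set_integrable lborel {0<..1::real} (chaos c)"
    and mean0: "(LINT t:{0<..1::real}|lborel. chaos c t) = 0"
  shows "\<forall>l n. l \<ge> 1 \<longrightarrow> n \<ge> 1 \<longrightarrow>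
           (LINT t:{0<..1::real}|lborel. dil (chaos c) l t * gfun d n t) = (if l = n then 1 else 0)"
proof (intro allI impI)
  fix l n :: nat
  assume "l \<ge> 1" "n \<ge> 1"
  interpret mean_zero_chaos c
    using int mean0 by (rule mean_zero_chaosI)
  show "(LINT t:{0<..1::real}|lborel. dil (chaos c) l t * gfun d n t) = (if l = n then 1 else 0)"
    unfolding set_integral_dil_chaos_gfun[OF \<open>l \<ge> 1\<close> \<open>n \<ge> 1\<close>]
    using d0 dk \<open>l \<ge> 1\<close> \<open>n \<ge> 1\<close> by (rule sum_inverse_coeffs_biorthogonal)
qed

end
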